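(* Let $T\colon \mathbb{N}\to\mathbb{N}$ be given by $T(n)=n/2$ for even $n$ and $T(n)=(3n+1)/2$ for odd $n$, with $k$-th iterate $T^{(k)}$. For each positive integer $k$ and each $r\in\{0,\ldots,2^k-1\}$ let $C_{k,r}\in\mathbb{Q}[X]$ denote the unique polynomial of degree at most one with $C_{k,r}(n)=T^{(k)}(n)$ for all positive integers $n\equiv r\pmod{2^k}$. Then for all positive integers $k,l$ and every $r\in\{0,\ldots,2^{k+l}-1\}$, writing $r'=r \bmod 2^l$ and $s=C_{l,r'}(r)\bmod 2^k$, one has the polynomial identity $$C_{k+l,r}(X)=C_{k,s}\bigl(C_{l,r'}(X)\bigr).$$
   Context: Here $a \bmod m$ denotes the least nonnegative residue of $a$ modulo $m$; note $C_{l,r'}(r)=T^{(l)}(r)$ is an integer (for $r=0$ interpret via the polynomial value, which is $0$). *)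

theory Defs
  imports "HOL-Computational_Algebra.Polynomial"
begin

definition collatzT :: "nat \<Rightarrow> nat" where
  "collatzT n = (if even n then n div 2 else (3 * n + 1) div 2)"

definition collatzC :: "nat \<Rightarrow> nat \<Rightarrow> rat poly" where
  "collatzC k r = (THE p. degree p \<le> 1 \<and>
     (\<forall>n::nat. 0 < n \<longrightarrow> n mod 2 ^ k = r \<longrightarrow>
        poly p (of_nat n) = of_nat ((collatzT ^^ k) n)))"

end

theory Submission
  imports Defs
begin

text \<open>Adding j 2^k to the starting point does not change the parities of the first k iterates,
  so each step either halves the offset or multiplies it by 3/2; hence
  T^k(m + j 2^k) = T^k(m) + 3^a j, where a counts the odd steps. Thus T^k is affine on each
  residue class modulo 2^k, which identifies C(k,r), and T^l maps a residue class modulo 2^(k+l)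
  into a single residue class modulo 2^k, on which T^k is given by C(k,s). Composing the two
  affine maps gives the identity.\<close>

lemma collatzT_add_double:
  "collatzT (t + 2 * c) = collatzT t + (if even t then c else 3 * c)"
  unfolding collatzT_def by auto

lemma funpow_collatzT_shift:
  "\<exists>a. \<forall>j. (collatzT ^^ k) (m + j * 2 ^ k) = (collatzT ^^ k) m + 3 ^ a * j"
proof (induction k)
  case 0
  show ?case by (rule exI[of _ 0]) simp
next
  case (Suc k)
  then obtain a where IH: "\<And>j. (collatzT ^^ k) (m + j * 2 ^ k) = (collatzT ^^ k) m + 3 ^ a * j"
    by blast
  define t where "t = (collatzT ^^ k) m"
  have "(collatzT ^^ Suc k) (m + j * 2 ^ Suc k) = collatzT (t + 2 * (3 ^ a * j))" for j
    using IH[of "2 * j"] by (simp add: t_def mult_ac)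
  then show ?case
    by (intro exI[of _ "if even t then a else Suc a"]) (simp add: collatzT_add_double t_def)
qed

lemma funpow_collatzT_mod:
  assumes "n mod 2 ^ (k + l) = m mod 2 ^ (k + l)"
  shows "(collatzT ^^ l) n mod 2 ^ k = (collatzT ^^ l) m mod 2 ^ k"
proof -
  have reduce: "(collatzT ^^ l) x mod 2 ^ k = (collatzT ^^ l) (x mod 2 ^ (k + l)) mod 2 ^ k" for x
  proof -
    obtain a where a: "\<And>j. (collatzT ^^ l) (x mod 2 ^ (k + l) + j * 2 ^ l)
        = (collatzT ^^ l) (x mod 2 ^ (k + l)) + 3 ^ a * j"
      using funpow_collatzT_shift by blast
    have "x = x mod 2 ^ (k + l) + (x div 2 ^ (k + l) * 2 ^ k) * 2 ^ l"
      by (metis mod_div_mult_eq power_add mult.assoc mult.commute)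
    then have "(collatzT ^^ l) x
        = (collatzT ^^ l) (x mod 2 ^ (k + l)) + (3 ^ a * (x div 2 ^ (k + l))) * 2 ^ k"
      using a by (metis mult.assoc)
    then show ?thesis by simp
  qed
  show ?thesis using reduce[of n] reduce[of m] assms by simp
qed

lemma collatzC_eqI:
  fixes p :: "rat poly"
  assumes "r < 2 ^ k" and "degree p \<le> 1"
    and "\<And>n. 0 < n \<Longrightarrow> n mod 2 ^ k = r \<Longrightarrow> poly p (of_nat n) = of_nat ((collatzT ^^ k) n)"
  shows "collatzC k r = p"
  unfolding collatzC_def
proof (rule the_equality)
  show "degree p \<le> 1 \<and> (\<forall>n. 0 < n \<longrightarrow> n mod 2 ^ k = r \<longrightarrow>
      poly p (of_nat n) = of_nat ((collatzT ^^ k) n))"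
    using assms by blast
  fix q :: "rat poly"
  assume q: "degree q \<le> 1 \<and> (\<forall>n. 0 < n \<longrightarrow> n mod 2 ^ k = r \<longrightarrow>
      poly q (of_nat n) = of_nat ((collatzT ^^ k) n))"
  let ?A = "of_nat ` {r + 2 ^ k, r + 2 * 2 ^ k} :: rat set"
  show "q = p"
  proof (rule poly_eqI_degree[of ?A])
    fix x assume "x \<in> ?A"
    then obtain n where n: "n \<in> {r + 2 ^ k, r + 2 * 2 ^ k}" "x = of_nat n"
      by blast
    then have "0 < n" "n mod 2 ^ k = r"
      using assms(1) by auto
    then show "poly q x = poly p x"
      using q assms(3) n(2) by presburger
  qed (use q assms(2) in \<open>simp_all add: card_image\<close>)
qed

lemma collatzC_interpolates:
  assumes "r < 2 ^ k"
  shows "degree (collatzC k r) \<le> 1"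
    and "n mod 2 ^ k = r \<Longrightarrow> poly (collatzC k r) (of_nat n) = of_nat ((collatzT ^^ k) n)"
proof -
  obtain a where a: "\<And>j. (collatzT ^^ k) (r + j * 2 ^ k) = (collatzT ^^ k) r + 3 ^ a * j"
    using funpow_collatzT_shift by blast
  define P :: "rat poly"
    where "P = [: of_nat ((collatzT ^^ k) r) - 3 ^ a * of_nat r / 2 ^ k, 3 ^ a / 2 ^ k :]"
  have P_val: "poly P (of_nat x) = of_nat ((collatzT ^^ k) x)" if "x mod 2 ^ k = r" for x
  proof -
    have "x = r + x div 2 ^ k * 2 ^ k"
      using that by (metis mod_div_mult_eq add.commute)
    then have "(collatzT ^^ k) x = (collatzT ^^ k) r + 3 ^ a * (x div 2 ^ k)"
      using a by metis
    moreover have "of_nat x = (of_nat r + of_nat (x div 2 ^ k) * 2 ^ k :: rat)"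
      using \<open>x = r + x div 2 ^ k * 2 ^ k\<close> by (metis of_nat_add of_nat_mult of_nat_numeral of_nat_power)
    ultimately show ?thesis
      by (simp add: P_def field_simps)
  qed
  have "collatzC k r = P"
    using assms P_val by (intro collatzC_eqI) (auto simp: P_def)
  then show "degree (collatzC k r) \<le> 1"
    and "n mod 2 ^ k = r \<Longrightarrow> poly (collatzC k r) (of_nat n) = of_nat ((collatzT ^^ k) n)"
    using P_val by (auto simp: P_def)
qed

theorem mainTheorem2:
  fixes k l r :: nat
  assumes "0 < k" and "0 < l" and "r < 2 ^ (k + l)"
  shows "collatzC (k + l) r =
    pcompose (collatzC k (nat (\<lfloor>poly (collatzC l (r mod 2 ^ l)) (of_nat r)\<rfloor> mod 2 ^ k)))
             (collatzC l (r mod 2 ^ l))"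
proof -
  let ?p = "collatzC l (r mod 2 ^ l)"
  define s where "s = (collatzT ^^ l) r mod 2 ^ k"
  let ?q = "collatzC k s"
  have p: "degree ?p \<le> 1"
    "\<And>n. n mod 2 ^ l = r mod 2 ^ l \<Longrightarrow> poly ?p (of_nat n) = of_nat ((collatzT ^^ l) n)"
    using collatzC_interpolates[of "r mod 2 ^ l" l] by auto
  have q: "degree ?q \<le> 1"
    "\<And>n. n mod 2 ^ k = s \<Longrightarrow> poly ?q (of_nat n) = of_nat ((collatzT ^^ k) n)"
    using collatzC_interpolates[of s k] by (auto simp: s_def)
  have "nat (\<lfloor>poly ?p (of_nat r)\<rfloor> mod 2 ^ k) = s"
    using p(2)[of r] by (simp add: s_def nat_mod_distrib nat_power_eq)
  moreover have "collatzC (k + l) r = pcompose ?q ?p"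
  proof (rule collatzC_eqI)
    show "degree (pcompose ?q ?p) \<le> 1"
      using mult_le_mono[OF q(1) p(1)] by (simp add: degree_pcompose)
    fix n assume n: "n mod 2 ^ (k + l) = r"
    then have "n mod 2 ^ l = r mod 2 ^ l"
      by (metis le_add2 le_imp_power_dvd mod_mod_cancel)
    moreover have "(collatzT ^^ l) n mod 2 ^ k = s"
      using funpow_collatzT_mod[of n k l r] n assms(3) by (simp add: s_def)
    ultimately show "poly (pcompose ?q ?p) (of_nat n) = of_nat ((collatzT ^^ (k + l)) n)"
      by (simp add: poly_pcompose funpow_add p(2) q(2))
  qed fact
  ultimately show ?thesis by simp
qed

end
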